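(* Let $\mathfrak{H}$ be a separable Hilbert space, $(\gamma^{(k)})_{k\in\mathbb{N}}\in\mathscr{H}(\mathfrak{H})$, and let $\mu$ be the $U(1)$-invariant Borel probability measure on $X_1=B_{\mathfrak{H}}(0,1)$ with $\gamma^{(k)}=\int_{X_1}|\varphi^{\otimes k}\rangle\langle\varphi^{\otimes k}|d\mu(\varphi)$ for all $k$. Then $\mathrm{Tr}_{k+1}[\gamma^{(k+1)}]=\gamma^{(k)}$ for all $k\in\mathbb{N}$ if and only if $\mu(\{0\}\cup S_{\mathfrak{H}}(0,1))=1$.
   Context: $\mathscr{H}(\mathfrak{H})$ is the set of sequences $(\gamma^{(k)})_{k\in\mathbb{N}}$, $\gamma^{(k)}$ trace class on the symmetric tensor product $\vee^k\mathfrak{H}$, of the form $\gamma^{(k)}=\int_{X_1}|\varphi^{\otimes k}\rangle\langle\varphi^{\otimes k}|d\mu(\varphi)$ for a (unique) $U(1)$-invariant Borel probability measure $\mu$ on the closed unit ball $X_1$ (equivalently, weak-$*$ subsequential limits of reduced density matrices of normal states on $\vee^n\mathfrak{H}$). $\mathrm{Tr}_{k+1}$ denotes the partial trace over the last tensor factor. $S_{\mathfrak{H}}(0,1)$ is the unit sphere. *)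

theory Defs
  imports "HOL-Probability.Probability"
begin

text \<open>The separable Hilbert space is realised concretely as l2(I) over a countable
  index type 'i (the Hilbert basis), vectors being square-summable functions
  'i \<Rightarrow> complex.\<close>

definition l2 :: "('i \<Rightarrow> complex) set" where
  "l2 = {x. (\<lambda>i. (cmod (x i))\<^sup>2) summable_on UNIV}"

definition l2norm :: "('i \<Rightarrow> complex) \<Rightarrow> real" where
  "l2norm x = sqrt (\<Sum>\<^sub>\<infinity>i. (cmod (x i))\<^sup>2)"

definition l2_open :: "('i \<Rightarrow> complex) set \<Rightarrow> bool" where
  "l2_open U \<longleftrightarrow> U \<subseteq> l2 \<and>
     (\<forall>x\<in>U. \<exists>e>0. \<forall>y\<in>l2. l2norm (y - x) < e \<longrightarrow> y \<in> U)"

definition unit_ball :: "('i \<Rightarrow> complex) set" where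
  "unit_ball = {x \<in> l2. l2norm x \<le> 1}"

definition unit_sphere :: "('i \<Rightarrow> complex) set" where
  "unit_sphere = {x \<in> l2. l2norm x = 1}"

definition borel_X1 :: "('i \<Rightarrow> complex) measure" where
  "borel_X1 = sigma unit_ball {unit_ball \<inter> U | U. l2_open U}"

definition U1_invariant :: "('i \<Rightarrow> complex) measure \<Rightarrow> bool" where
  "U1_invariant \<mu> \<longleftrightarrow> (\<forall>\<theta>::real. \<forall>A\<in>sets \<mu>.
     emeasure \<mu> ((\<lambda>x. (\<lambda>i. cis \<theta> * x i)) -` A \<inter> space \<mu>) = emeasure \<mu> A)"

text \<open>Matrix element <e_is, gamma^(k) e_js> (k = length is = length js) of
  gamma^(k) = integral of |phi^{\<otimes>k}><phi^{\<otimes>k}| d\<mu>(phi),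
  w.r.t. the product basis e_{i_1} \<otimes> ... \<otimes> e_{i_k} of the k-fold tensor product.\<close>
definition dm_gamma :: "('i \<Rightarrow> complex) measure \<Rightarrow> 'i list \<Rightarrow> 'i list \<Rightarrow> complex" where
  "dm_gamma \<mu> is js =
     (LINT \<phi>|\<mu>. prod_list (map \<phi> is) * prod_list (map (\<lambda>j. cnj (\<phi> j)) js))"

text \<open>Tr_{k+1}[gamma^(k+1)] = gamma^(k), in matrix elements: partial trace over
  the last factor.\<close>
definition partial_trace_consistent :: "('i \<Rightarrow> complex) measure \<Rightarrow> nat \<Rightarrow> bool" where
  "partial_trace_consistent \<mu> k \<longleftrightarrow>
     (\<forall>is js. length is = k \<longrightarrow> length js = k \<longrightarrow>
        ((\<lambda>m. dm_gamma \<mu> (is @ [m]) (js @ [m])) has_sum dm_gamma \<mu> is js) UNIV)"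

end

theory Submission
  imports Defs
begin

(* Write N(phi) = ||phi||^2, which lies in [0,1] on the unit ball. Summing the diagonal matrix
   element <e_i (x) e_m, gamma^(2) e_i (x) e_m> over m gives E[|phi_i|^2 N], so Tr_2 gamma^(2) = gamma^(1)
   forces E[|phi_i|^2 N] = E[|phi_i|^2]; summing over i gives E[N^2] = E[N], and since N(1 - N) >= 0
   this means N(1 - N) = 0 almost surely. Conversely, if N is 0 or 1 almost surely, then summing the
   matrix elements of gamma^(k+1) over the last index multiplies the integrand by N, which changes
   nothing: where N = 0 we have phi = 0, and the integrand vanishes there because k >= 1. Exchanging the
   sum over m with the integral is dominated convergence for countable sums. *)

lemma filterlim_to_nat_less_finite_subsets:
  "filterlim (\<lambda>n. {m::'m::countable. to_nat m < n}) (finite_subsets_at_top UNIV) sequentially"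
  unfolding filterlim_finite_subsets_at_top
proof (intro allI impI)
  fix X :: "'m set" assume "finite X \<and> X \<subseteq> UNIV"
  then have "X \<subseteq> {m. to_nat m < n}" if "Suc (Max (to_nat ` X)) \<le> n" for n
    using that by (auto dest!: Max_ge[of "to_nat ` X", OF finite_imageI])
  then have "eventually (\<lambda>n. X \<subseteq> {m. to_nat m < n}) sequentially"
    by (rule eventually_sequentiallyI)
  moreover have finite: "finite {m::'m. to_nat m < n}" for n
    using finite_vimageI[of "{..<n}" to_nat] by (simp add: vimage_def)
  ultimately show "eventually (\<lambda>n. finite {m::'m. to_nat m < n} \<and> X \<subseteq> {m. to_nat m < n}
      \<and> {m::'m. to_nat m < n} \<subseteq> UNIV) sequentially"
    by (elim eventually_mono) (simp add: finite)
qed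

lemma borel_measurable_has_sum:
  fixes f :: "'m::countable \<Rightarrow> 'a \<Rightarrow> 'b::{banach, second_countable_topology}"
  assumes "\<And>m. f m \<in> borel_measurable M"
    and "\<And>x. x \<in> space M \<Longrightarrow> ((\<lambda>m. f m x) has_sum h x) UNIV"
  shows "h \<in> borel_measurable M"
proof (rule borel_measurable_LIMSEQ_metric)
  show "(\<lambda>x. \<Sum>m | to_nat m < n. f m x) \<in> borel_measurable M" for n
    using assms(1) by measurable
  show "(\<lambda>n. \<Sum>m | to_nat m < n. f m x) \<longlonglongrightarrow> h x" if "x \<in> space M" for x
    using assms(2)[OF that] filterlim_to_nat_less_finite_subsets
    unfolding has_sum_def by (metis filterlim_compose)
qed

lemma norm_has_sum_minus_sum_le:
  fixes f :: "'m \<Rightarrow> 'b::banach"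
  assumes "(f has_sum s) A" and "((\<lambda>m. norm (f m)) has_sum n) A" and "finite F" "F \<subseteq> A"
  shows "norm (s - sum f F) \<le> n - (\<Sum>m\<in>F. norm (f m))"
proof -
  have minus_restrict: "((\<lambda>m. - (if m \<in> F then g m else 0)) has_sum - sum g F) A"
    for g :: "'m \<Rightarrow> 'c::banach"
    unfolding has_sum_uminus minus_minus using assms(3,4) by (intro has_sum_finite_neutralI[of F]) auto
  have diff: "((\<lambda>m. f m - (if m \<in> F then f m else 0)) has_sum s - sum f F) A"
    using has_sum_add[OF assms(1) minus_restrict] by simp
  have "((\<lambda>m. norm (f m) - (if m \<in> F then norm (f m) else 0))
      has_sum n - (\<Sum>m\<in>F. norm (f m))) A"
    using has_sum_add[OF assms(2) minus_restrict] by simp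
  then have "((\<lambda>m. norm (f m - (if m \<in> F then f m else 0)))
      has_sum n - (\<Sum>m\<in>F. norm (f m))) A"
    by (rule has_sum_cong[THEN iffD1, rotated]) simp
  then show ?thesis
    by (rule norm_has_sum_bound[OF _ diff])
qed

lemma has_sum_iff_nn_integral_count_space:
  fixes a :: "'m \<Rightarrow> real"
  assumes nonneg: "\<And>m. 0 \<le> a m" and "0 \<le> c"
  shows "(a has_sum c) UNIV \<longleftrightarrow> (\<integral>\<^sup>+m. ennreal (a m) \<partial>count_space UNIV) = ennreal c"
proof -
  have "(\<lambda>m. norm (a m)) = a"
    using nonneg by auto
  then have summable_iff: "a summable_on UNIV \<longleftrightarrow> Infinite_Set_Sum.abs_summable_on a UNIV"
    using abs_summable_equivalent[of a UNIV] by simp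
  show ?thesis
  proof
    assume "(a has_sum c) UNIV"
    then have "Infinite_Set_Sum.abs_summable_on a UNIV" and "infsum a UNIV = c"
      using summable_iff by (auto simp: has_sum_iff)
    then show "(\<integral>\<^sup>+m. ennreal (a m) \<partial>count_space UNIV) = ennreal c"
      using nonneg by (simp add: nn_integral_conv_infsetsum infsetsum_infsum)
  next
    assume integral: "(\<integral>\<^sup>+m. ennreal (a m) \<partial>count_space UNIV) = ennreal c"
    then have summable: "Infinite_Set_Sum.abs_summable_on a UNIV"
      unfolding abs_summable_on_def using nonneg by (intro integrableI_nonneg) auto
    then have "infsum a UNIV = c"
      using integral nonneg \<open>0 \<le> c\<close> by (simp add: infsetsum_infsum[symmetric] infsetsum_conv_nn_integral)
    then show "(a has_sum c) UNIV"
      using summable summable_iff by (simp add: has_sum_iff)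
  qed
qed

lemma has_sum_integral_nonneg:
  fixes g :: "'m::countable \<Rightarrow> 'a \<Rightarrow> real"
  assumes g_int: "\<And>m. integrable M (g m)" and g_nonneg: "\<And>m x. x \<in> space M \<Longrightarrow> 0 \<le> g m x"
    and g_sum: "\<And>x. x \<in> space M \<Longrightarrow> ((\<lambda>m. g m x) has_sum G x) UNIV"
    and G_int: "integrable M G"
  shows "((\<lambda>m. \<integral>x. g m x \<partial>M) has_sum (\<integral>x. G x \<partial>M)) UNIV"
proof -
  have G_nonneg: "0 \<le> G x" if "x \<in> space M" for x
    using has_sum_nonneg[OF g_sum] g_nonneg that by blast
  have "(\<integral>\<^sup>+m. ennreal (\<integral>x. g m x \<partial>M) \<partial>count_space UNIV) =
      (\<integral>\<^sup>+m. \<integral>\<^sup>+x. ennreal (g m x) \<partial>M \<partial>count_space UNIV)"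
    using g_int g_nonneg by (intro nn_integral_cong nn_integral_eq_integral[symmetric] AE_I2) auto
  also have "\<dots> = (\<integral>\<^sup>+x. \<integral>\<^sup>+m. ennreal (g m x) \<partial>count_space UNIV \<partial>M)"
    using g_int by (intro nn_integral_count_space_nn_integral[symmetric]) auto
  also have "\<dots> = (\<integral>\<^sup>+x. ennreal (G x) \<partial>M)"
    using g_sum g_nonneg G_nonneg by (intro nn_integral_cong) (simp add: has_sum_iff_nn_integral_count_space)
  also have "\<dots> = ennreal (\<integral>x. G x \<partial>M)"
    using G_int G_nonneg by (intro nn_integral_eq_integral AE_I2) auto
  finally show ?thesis
    using g_nonneg G_nonneg
    by (subst has_sum_iff_nn_integral_count_space) (auto intro!: integral_nonneg_AE AE_I2)
qed

lemma has_sum_integral: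
  fixes f :: "'m::countable \<Rightarrow> 'a \<Rightarrow> 'b::{banach, second_countable_topology}"
  assumes f_int: "\<And>m. integrable M (f m)"
    and f_sum: "\<And>x. x \<in> space M \<Longrightarrow> ((\<lambda>m. f m x) has_sum h x) UNIV"
    and norm_sum: "\<And>x. x \<in> space M \<Longrightarrow> ((\<lambda>m. norm (f m x)) has_sum G x) UNIV"
    and G_int: "integrable M G"
  shows "((\<lambda>m. \<integral>x. f m x \<partial>M) has_sum (\<integral>x. h x \<partial>M)) UNIV"
proof -
  have "f m \<in> borel_measurable M" for m
    using f_int by (rule borel_measurable_integrable)
  then have "h \<in> borel_measurable M"
    using f_sum by (rule borel_measurable_has_sum)
  then have h_int: "integrable M h"
    using norm_has_sum_bound[OF norm_sum f_sum]
    by (intro Bochner_Integration.integrable_bound[OF G_int] AE_I2)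
      (auto intro: order_trans[OF _ abs_ge_self])
  have norm_f_sum: "((\<lambda>m. \<integral>x. norm (f m x) \<partial>M) has_sum (\<integral>x. G x \<partial>M)) UNIV"
    using f_int norm_sum G_int by (intro has_sum_integral_nonneg) auto
  have bound: "norm ((\<Sum>m\<in>F. \<integral>x. f m x \<partial>M) - (\<integral>x. h x \<partial>M))
      \<le> (\<integral>x. G x \<partial>M) - (\<Sum>m\<in>F. \<integral>x. norm (f m x) \<partial>M)" if "finite F" for F
  proof -
    have "(\<integral>x. h x - (\<Sum>m\<in>F. f m x) \<partial>M) = (\<integral>x. h x \<partial>M) - (\<Sum>m\<in>F. \<integral>x. f m x \<partial>M)"
      using f_int h_int by simp
    then have "norm ((\<Sum>m\<in>F. \<integral>x. f m x \<partial>M) - (\<integral>x. h x \<partial>M)) =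
        norm (\<integral>x. h x - (\<Sum>m\<in>F. f m x) \<partial>M)"
      by (simp add: norm_minus_commute)
    also have "\<dots> \<le> (\<integral>x. norm (h x - (\<Sum>m\<in>F. f m x)) \<partial>M)"
      by (rule integral_norm_bound)
    also have "\<dots> \<le> (\<integral>x. G x - (\<Sum>m\<in>F. norm (f m x)) \<partial>M)"
      using f_int h_int G_int norm_has_sum_minus_sum_le[OF f_sum norm_sum that]
      by (intro integral_mono) auto
    also have "\<dots> = (\<integral>x. G x \<partial>M) - (\<Sum>m\<in>F. \<integral>x. norm (f m x) \<partial>M)"
      using f_int G_int by simp
    finally show ?thesis .
  qed
  have "((\<lambda>F. (\<integral>x. G x \<partial>M) - (\<Sum>m\<in>F. \<integral>x. norm (f m x) \<partial>M)) \<longlongrightarrow> 0)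
      (finite_subsets_at_top UNIV)"
    using tendsto_diff[OF tendsto_const norm_f_sum[unfolded has_sum_def], of "\<integral>x. G x \<partial>M"] by simp
  moreover have "eventually (\<lambda>F. norm ((\<Sum>m\<in>F. \<integral>x. f m x \<partial>M) - (\<integral>x. h x \<partial>M))
      \<le> (\<integral>x. G x \<partial>M) - (\<Sum>m\<in>F. \<integral>x. norm (f m x) \<partial>M)) (finite_subsets_at_top UNIV)"
    using bound by (intro eventually_finite_subsets_at_top_weakI)
  ultimately have "((\<lambda>F. (\<Sum>m\<in>F. \<integral>x. f m x \<partial>M) - (\<integral>x. h x \<partial>M)) \<longlongrightarrow> 0)
      (finite_subsets_at_top UNIV)"
    by (rule Lim_null_comparison[rotated])
  then show ?thesis
    unfolding has_sum_def by (rule LIM_zero_cancel)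
qed

lemma AE_eq_0_or_1_if_integral_square_eq:
  fixes f :: "'a \<Rightarrow> real"
  assumes "integrable M f" and range: "\<And>x. x \<in> space M \<Longrightarrow> 0 \<le> f x \<and> f x \<le> 1"
    and "(\<integral>x. (f x)\<^sup>2 \<partial>M) = (\<integral>x. f x \<partial>M)"
  shows "AE x in M. f x = 0 \<or> f x = 1"
proof -
  have "integrable M (\<lambda>x. (f x)\<^sup>2)"
    using range borel_measurable_integrable[OF assms(1)]
    by (intro Bochner_Integration.integrable_bound[OF assms(1)] AE_I2) (auto simp: power2_eq_square mult_left_le)
  then have "(\<integral>x. f x - (f x)\<^sup>2 \<partial>M) = 0"
    using assms by simp
  moreover have "AE x in M. 0 \<le> f x - (f x)\<^sup>2"
    using range by (intro AE_I2) (simp add: power2_eq_square mult_left_le)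
  ultimately have "AE x in M. f x - (f x)\<^sup>2 = 0"
    using assms \<open>integrable M (\<lambda>x. (f x)\<^sup>2)\<close> by (subst integral_nonneg_eq_0_iff_AE[symmetric]) auto
  then show ?thesis
    by eventually_elim (auto simp: power2_eq_square)
qed

lemma borel_measurable_prod_list:
  fixes f :: "'j \<Rightarrow> 'a \<Rightarrow> 'b::{second_countable_topology, real_normed_algebra_1}"
  assumes "\<And>j. f j \<in> borel_measurable M"
  shows "(\<lambda>x. prod_list (map (\<lambda>j. f j x) js)) \<in> borel_measurable M"
  by (induction js) (simp_all add: assms borel_measurable_times)

lemma norm_prod_list_le_1:
  fixes zs :: "'a::real_normed_algebra_1 list"
  assumes "\<And>z. z \<in> set zs \<Longrightarrow> norm z \<le> 1"
  shows "norm (prod_list zs) \<le> 1"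
  using assms
proof (induction zs)
  case (Cons z zs)
  then have "norm (z * prod_list zs) \<le> norm z * norm (prod_list zs)"
    by (rule_tac norm_mult_ineq)
  also have "\<dots> \<le> 1"
    using Cons by (intro mult_le_one) auto
  finally show ?case
    by simp
qed simp

definition l2norm_sq :: "('i \<Rightarrow> complex) \<Rightarrow> real" where
  "l2norm_sq x = (\<Sum>\<^sub>\<infinity>i. (cmod (x i))\<^sup>2)"

lemma l2norm_eq_sqrt_l2norm_sq: "l2norm x = sqrt (l2norm_sq x)"
  unfolding l2norm_def l2norm_sq_def ..

lemma has_sum_l2norm_sq:
  assumes "x \<in> l2"
  shows "((\<lambda>i. (cmod (x i))\<^sup>2) has_sum l2norm_sq x) UNIV"
  using assms unfolding l2_def l2norm_sq_def by simp

lemma l2norm_sq_nonneg: "0 \<le> l2norm_sq x"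
  unfolding l2norm_sq_def by (intro infsum_nonneg) auto

lemma norm_coord_sq_le_l2norm_sq:
  assumes "x \<in> l2"
  shows "(cmod (x i))\<^sup>2 \<le> l2norm_sq x"
  using finite_sum_le_infsum[of "\<lambda>i. (cmod (x i))\<^sup>2" UNIV "{i}"] assms
  unfolding l2_def l2norm_sq_def by simp

lemma norm_coord_le_l2norm:
  assumes "x \<in> l2"
  shows "cmod (x i) \<le> l2norm x"
  using norm_coord_sq_le_l2norm_sq[OF assms]
  unfolding l2norm_eq_sqrt_l2norm_sq by (simp add: real_le_rsqrt)

lemma l2norm_sq_eq_0_iff:
  assumes "x \<in> l2"
  shows "l2norm_sq x = 0 \<longleftrightarrow> x = (\<lambda>_. 0)"
proof
  assume "l2norm_sq x = 0"
  then show "x = (\<lambda>_. 0)"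
    using norm_coord_sq_le_l2norm_sq[OF assms] by (auto simp: fun_eq_iff)
qed (simp add: l2norm_sq_def)

lemma l2_diff:
  assumes "x \<in> l2" "y \<in> l2"
  shows "x - y \<in> l2"
proof -
  have "(\<lambda>i. 2 * (cmod (x i))\<^sup>2 + 2 * (cmod (y i))\<^sup>2) summable_on UNIV"
    using assms unfolding l2_def by (intro summable_on_add summable_on_cmult_right) auto
  moreover have "(cmod (x i - y i))\<^sup>2 \<le> 2 * (cmod (x i))\<^sup>2 + 2 * (cmod (y i))\<^sup>2" for i
  proof -
    have "(cmod (x i - y i))\<^sup>2 \<le> (cmod (x i) + cmod (y i))\<^sup>2"
      by (intro power_mono norm_triangle_ineq4) auto
    also have "\<dots> \<le> 2 * (cmod (x i))\<^sup>2 + 2 * (cmod (y i))\<^sup>2"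
      by (smt (verit) sum_squares_bound power2_sum)
    finally show ?thesis .
  qed
  ultimately show ?thesis
    unfolding l2_def by (auto intro: summable_on_comparison_test)
qed

lemma unit_ball_iff: "x \<in> unit_ball \<longleftrightarrow> x \<in> l2 \<and> l2norm_sq x \<le> 1"
  unfolding unit_ball_def l2norm_eq_sqrt_l2norm_sq by simp

lemma zero_or_unit_sphere_eq:
  "{\<lambda>_. 0} \<union> unit_sphere = {x \<in> unit_ball. l2norm_sq x = 0 \<or> l2norm_sq x = 1}"
proof -
  have "(\<lambda>_. 0) \<in> l2" "l2norm_sq (\<lambda>_. 0) = 0"
    unfolding l2_def l2norm_sq_def by simp_all
  then show ?thesis
    using l2norm_sq_eq_0_iff l2norm_sq_nonneg
    unfolding unit_sphere_def unit_ball_iff l2norm_eq_sqrt_l2norm_sq by auto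
qed

lemma space_borel_X1: "space borel_X1 = unit_ball"
  unfolding borel_X1_def by (rule space_measure_of) auto

lemma borel_measurable_coord_borel_X1: "(\<lambda>x. x i) \<in> borel_measurable borel_X1"
proof (rule borel_measurableI)
  fix S :: "complex set"
  assume "open S"
  define U where "U = {y \<in> l2. y i \<in> S}"
  have "l2_open U"
    unfolding l2_open_def
  proof (intro conjI ballI)
    fix x assume "x \<in> U"
    then obtain e where "e > 0" "ball (x i) e \<subseteq> S" and x: "x \<in> l2"
      using \<open>open S\<close> unfolding U_def by (auto simp: open_contains_ball)
    moreover have "dist (x i) (y i) < e" if "y \<in> l2" "l2norm (y - x) < e" for y
      using norm_coord_le_l2norm[OF l2_diff[OF that(1) x], of i] that(2)
      by (simp add: dist_norm norm_minus_commute)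
    ultimately show "\<exists>e>0. \<forall>y\<in>l2. l2norm (y - x) < e \<longrightarrow> y \<in> U"
      unfolding U_def by (intro exI[of _ e]) (auto simp: subset_iff)
  qed (auto simp: U_def)
  moreover have "(\<lambda>x. x i) -` S \<inter> space borel_X1 = unit_ball \<inter> U"
    unfolding space_borel_X1 U_def unit_ball_def by auto
  ultimately show "(\<lambda>x. x i) -` S \<inter> space borel_X1 \<in> sets borel_X1"
    unfolding borel_X1_def by (auto intro!: sigma_sets.Basic)
qed

definition coord_monomial :: "'i list \<Rightarrow> 'i list \<Rightarrow> ('i \<Rightarrow> complex) \<Rightarrow> complex" where
  "coord_monomial is js x = prod_list (map x is) * prod_list (map (\<lambda>j. cnj (x j)) js)"

lemma dm_gamma_eq_integral: "dm_gamma \<mu> is js = (\<integral>x. coord_monomial is js x \<partial>\<mu>)"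
  unfolding dm_gamma_def coord_monomial_def ..

lemma coord_monomial_snoc:
  "coord_monomial (is @ [m]) (js @ [m]) x = coord_monomial is js x * of_real ((cmod (x m))\<^sup>2)"
  unfolding coord_monomial_def by (simp del: of_real_power add: complex_norm_square mult_ac)

lemma coord_monomial_single: "coord_monomial [i] [i] x = of_real ((cmod (x i))\<^sup>2)"
  unfolding coord_monomial_def by (simp del: of_real_power add: complex_norm_square)

lemma coord_monomial_zero: "is \<noteq> [] \<Longrightarrow> coord_monomial is js (\<lambda>_. 0) = 0"
  unfolding coord_monomial_def by (cases "is") auto

lemma norm_coord_monomial_le_1:
  assumes "\<And>i. cmod (x i) \<le> 1"
  shows "norm (coord_monomial is js x) \<le> 1"
  unfolding coord_monomial_def norm_mult
  using assms by (intro mult_le_one norm_prod_list_le_1) auto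

locale X1_prob_space = prob_space M for M :: "('i::countable \<Rightarrow> complex) measure" +
  assumes sets_eq_borel_X1: "sets M = sets borel_X1"
begin

lemma space_eq_unit_ball: "space M = unit_ball"
  using sets_eq_imp_space_eq[OF sets_eq_borel_X1] space_borel_X1 by simp

lemma l2_if_in_space: "x \<in> space M \<Longrightarrow> x \<in> l2"
  and l2norm_sq_le_1: "x \<in> space M \<Longrightarrow> l2norm_sq x \<le> 1"
  using space_eq_unit_ball unit_ball_iff by auto

lemma norm_coord_le_1: "x \<in> space M \<Longrightarrow> cmod (x i) \<le> 1"
  using norm_coord_le_l2norm[OF l2_if_in_space] l2norm_sq_le_1
  unfolding l2norm_eq_sqrt_l2norm_sq by (meson order_trans real_sqrt_le_1_iff)

lemma borel_measurable_coord [measurable]: "(\<lambda>x. x i) \<in> borel_measurable M"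
  using borel_measurable_coord_borel_X1 by (simp add: measurable_cong_sets[OF sets_eq_borel_X1 refl])

lemma borel_measurable_l2norm_sq [measurable]: "l2norm_sq \<in> borel_measurable M"
  by (rule borel_measurable_has_sum[OF _ has_sum_l2norm_sq[OF l2_if_in_space]]) measurable

lemma borel_measurable_coord_monomial [measurable]: "coord_monomial is js \<in> borel_measurable M"
proof -
  have [measurable]: "cnj \<in> borel_measurable borel"
    by (intro borel_measurable_continuous_onI linear_continuous_on bounded_linear_cnj)
  show ?thesis
    unfolding coord_monomial_def[abs_def]
    by (intro borel_measurable_times borel_measurable_prod_list[of "\<lambda>i x. x i"]
        borel_measurable_prod_list[of "\<lambda>j x. cnj (x j)"]) measurable
qed

lemma has_sum_integral_weighted_coord_sq:
  fixes w :: "('i \<Rightarrow> complex) \<Rightarrow> complex"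
  assumes [measurable]: "w \<in> borel_measurable M" and bounded: "\<And>x. x \<in> space M \<Longrightarrow> norm (w x) \<le> B"
  shows "((\<lambda>m. \<integral>x. w x * of_real ((cmod (x m))\<^sup>2) \<partial>M) has_sum
      (\<integral>x. w x * of_real (l2norm_sq x) \<partial>M)) UNIV"
proof (rule has_sum_integral)
  have weight_le: "norm (w x) * r \<le> B" if "x \<in> space M" "0 \<le> r" "r \<le> 1" for x r
    using mult_right_le_one_le[OF norm_ge_zero[of "w x"] that(2,3)] bounded[OF that(1)] by linarith
  show "integrable M (\<lambda>x. w x * of_real ((cmod (x m))\<^sup>2))" for m
    using weight_le norm_coord_le_1
    by (intro integrable_const_bound[where B = B] AE_I2)
      (simp_all del: of_real_power add: norm_mult power_le_one)
  show "((\<lambda>m. w x * of_real ((cmod (x m))\<^sup>2)) has_sum w x * of_real (l2norm_sq x)) UNIV"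
    if "x \<in> space M" for x
    using has_sum_cmult_right[where c = "w x",
        OF has_sum_of_real[OF has_sum_l2norm_sq[OF l2_if_in_space[OF that]]]]
    by (simp del: of_real_power)
  show "((\<lambda>m. norm (w x * of_real ((cmod (x m))\<^sup>2))) has_sum norm (w x) * l2norm_sq x) UNIV"
    if "x \<in> space M" for x
    using has_sum_cmult_right[OF has_sum_l2norm_sq[OF l2_if_in_space[OF that]]]
    by (simp del: of_real_power add: norm_mult)
  show "integrable M (\<lambda>x. norm (w x) * l2norm_sq x)"
    using weight_le l2norm_sq_le_1
    by (intro integrable_const_bound[where B = B] AE_I2) (simp_all add: abs_mult l2norm_sq_nonneg)
qed

lemma emeasure_zero_or_unit_sphere_eq_1_iff:
  "emeasure M ({\<lambda>_. 0} \<union> unit_sphere) = 1 \<longleftrightarrow> (AE x in M. l2norm_sq x = 0 \<or> l2norm_sq x = 1)"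
proof -
  have "{\<lambda>_. 0} \<union> unit_sphere = {x \<in> space M. l2norm_sq x = 0 \<or> l2norm_sq x = 1}"
    unfolding zero_or_unit_sphere_eq space_eq_unit_ball ..
  moreover have "{x \<in> space M. l2norm_sq x = 0 \<or> l2norm_sq x = 1} \<in> events"
    by measurable
  ultimately show ?thesis
    by (simp add: prob_Collect_eq_1 emeasure_eq_measure)
qed

lemma AE_l2norm_sq_0_or_1_if_partial_trace_consistent:
  assumes "partial_trace_consistent M 1"
  shows "AE x in M. l2norm_sq x = 0 \<or> l2norm_sq x = 1"
proof (rule AE_eq_0_or_1_if_integral_square_eq)
  let ?sq = "\<lambda>i x. complex_of_real ((cmod (x i))\<^sup>2)"
  have weighted_eq: "(\<integral>x. ?sq i x * of_real (l2norm_sq x) \<partial>M) = (\<integral>x. ?sq i x \<partial>M)" for i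
  proof (rule has_sum_unique)
    show "((\<lambda>m. \<integral>x. ?sq i x * ?sq m x \<partial>M) has_sum (\<integral>x. ?sq i x \<partial>M)) UNIV"
      using assms[unfolded partial_trace_consistent_def, rule_format, of "[i]" "[i]"]
      by (simp del: of_real_power append_Cons append_Nil
          add: dm_gamma_eq_integral coord_monomial_snoc coord_monomial_single)
    show "((\<lambda>m. \<integral>x. ?sq i x * ?sq m x \<partial>M) has_sum
        (\<integral>x. ?sq i x * of_real (l2norm_sq x) \<partial>M)) UNIV"
      using norm_coord_le_1
      by (intro has_sum_integral_weighted_coord_sq[where B = 1]) (simp_all del: of_real_power add: power_le_one)
  qed
  have "((\<lambda>i. \<integral>x. ?sq i x \<partial>M) has_sum
      (\<integral>x. of_real (l2norm_sq x) * of_real (l2norm_sq x) \<partial>M)) UNIV"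
    using has_sum_integral_weighted_coord_sq[of "\<lambda>x. of_real (l2norm_sq x)" 1] weighted_eq l2norm_sq_le_1
    by (simp add: l2norm_sq_nonneg mult.commute)
  moreover have "((\<lambda>i. \<integral>x. ?sq i x \<partial>M) has_sum (\<integral>x. of_real (l2norm_sq x) \<partial>M)) UNIV"
    using has_sum_integral_weighted_coord_sq[of "\<lambda>_. 1" 1] by simp
  ultimately have "(\<integral>x. of_real (l2norm_sq x) * of_real (l2norm_sq x) \<partial>M) =
      (\<integral>x. complex_of_real (l2norm_sq x) \<partial>M)"
    by (rule has_sum_unique)
  then have "complex_of_real (\<integral>x. (l2norm_sq x)\<^sup>2 \<partial>M) = of_real (\<integral>x. l2norm_sq x \<partial>M)"
    by (simp only: integral_complex_of_real[symmetric] power2_eq_square of_real_mult)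
  then show "(\<integral>x. (l2norm_sq x)\<^sup>2 \<partial>M) = (\<integral>x. l2norm_sq x \<partial>M)"
    by (rule of_real_eq_iff[THEN iffD1])
  show "integrable M l2norm_sq"
    using l2norm_sq_le_1 by (intro integrable_const_bound[where B = 1] AE_I2) (simp_all add: l2norm_sq_nonneg)
qed (simp add: l2norm_sq_nonneg l2norm_sq_le_1)

lemma partial_trace_consistent_if_AE_l2norm_sq_0_or_1:
  assumes "AE x in M. l2norm_sq x = 0 \<or> l2norm_sq x = 1" and "1 \<le> k"
  shows "partial_trace_consistent M k"
  unfolding partial_trace_consistent_def
proof (intro allI impI)
  fix "is" js :: "'i list"
  assume "length is = k" "length js = k"
  then have "is \<noteq> []"
    using \<open>1 \<le> k\<close> by auto
  have "((\<lambda>m. dm_gamma M (is @ [m]) (js @ [m])) has_sum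
      (\<integral>x. coord_monomial is js x * of_real (l2norm_sq x) \<partial>M)) UNIV"
    unfolding dm_gamma_eq_integral coord_monomial_snoc
    by (intro has_sum_integral_weighted_coord_sq[where B = 1] norm_coord_monomial_le_1 norm_coord_le_1)
      simp_all
  also have "(\<integral>x. coord_monomial is js x * of_real (l2norm_sq x) \<partial>M) = dm_gamma M is js"
    unfolding dm_gamma_eq_integral
  proof (rule integral_cong_AE)
    show "AE x in M. coord_monomial is js x * of_real (l2norm_sq x) = coord_monomial is js x"
      using assms(1) AE_space
    proof eventually_elim
      case (elim x)
      then show ?case
        using l2norm_sq_eq_0_iff[OF l2_if_in_space[OF elim(2)]] coord_monomial_zero[OF \<open>is \<noteq> []\<close>]
        by auto
    qed
  qed measurable
  finally show "((\<lambda>m. dm_gamma M (is @ [m]) (js @ [m])) has_sum dm_gamma M is js) UNIV" .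
qed

end

theorem mainTheorem9:
  fixes \<mu> :: "('i::countable \<Rightarrow> complex) measure"
  assumes "prob_space \<mu>"
    and "sets \<mu> = sets borel_X1"
    and "U1_invariant \<mu>"
  shows "(\<forall>k\<ge>1. partial_trace_consistent \<mu> k) \<longleftrightarrow>
         emeasure \<mu> ({\<lambda>_. 0} \<union> unit_sphere) = 1"
proof -
  interpret X1_prob_space \<mu>
    by (rule X1_prob_space.intro[OF assms(1) X1_prob_space_axioms.intro[OF assms(2)]])
  show ?thesis
    unfolding emeasure_zero_or_unit_sphere_eq_1_iff
    using AE_l2norm_sq_0_or_1_if_partial_trace_consistent partial_trace_consistent_if_AE_l2norm_sq_0_or_1
    by blast
qed

end
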